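(* Let $\gamma: I \to M$ be a unit speed curve on a smooth oriented surface $M \subset E^3$ with Darboux frame $\{T, V, U\}$, normal curvature $k_n$, geodesic curvature $k_g$ (nowhere zero) and geodesic torsion $\tau_g$, and suppose the position vector of $\gamma$ always lies in the plane spanned by $\{T, U\}$, i.e. $\gamma(s) = \lambda_1(s) T(s) + \lambda_2(s) U(s)$ for some differentiable functions $\lambda_1, \lambda_2$. Then $\gamma$ is a relatively normal-slant helix if and only if the function $$s \mapsto \frac{k_g^2}{(k_g^2 + \tau_g^2)^{3/2}}\, e^{\int \frac{\tau_g k_n}{k_g}\, ds}$$ is constant.
   Context: For a unit speed curve $\gamma$ on an oriented surface $M\subset E^3$, the Darboux frame is $T=\gamma'$, $U$ = unit normal of $M$ along $\gamma$, $V = U\times T$, satisfying $T' = k_g V + k_n U$, $V' = -k_g T + \tau_g U$, $U' = -k_n T - \tau_g V$; here $k_g$, $k_n$, $\tau_g$ are the geodesic curvature, normal curvature and geodesic torsion. The curve $\gamma$ is a relatively normal-slant helix if there is a fixed unit vector $d$ and a constant angle $\phi$ with $\langle V, d\rangle = \cos\phi$ along $\gamma$. The "position vector" is $\gamma(s)$ regarded as a vector from the origin. $\int \cdot\, ds$ denotes an antiderivative. *)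

theory Defs
  imports "HOL-Analysis.Analysis"
begin

text \<open>A curve with Darboux frame (T, V, U) along it: T is the unit tangent, U a unit vector
normal to T (the surface normal), V = U x T, and the Darboux equations hold with
geodesic curvature kg, normal curvature kn, geodesic torsion tg.\<close>

definition darboux_curve ::
  "real set \<Rightarrow> (real \<Rightarrow> real^3) \<Rightarrow> (real \<Rightarrow> real^3) \<Rightarrow> (real \<Rightarrow> real^3) \<Rightarrow> (real \<Rightarrow> real^3)
   \<Rightarrow> (real \<Rightarrow> real) \<Rightarrow> (real \<Rightarrow> real) \<Rightarrow> (real \<Rightarrow> real) \<Rightarrow> bool" where
  "darboux_curve I \<gamma> T V U kg kn tg \<longleftrightarrow>
     (\<forall>s\<in>I.
        (\<gamma> has_vector_derivative T s) (at s) \<and>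
        norm (T s) = 1 \<and> norm (U s) = 1 \<and> T s \<bullet> U s = 0 \<and>
        V s = cross3 (U s) (T s) \<and>
        (T has_vector_derivative (kg s *\<^sub>R V s + kn s *\<^sub>R U s)) (at s) \<and>
        (V has_vector_derivative (- kg s *\<^sub>R T s + tg s *\<^sub>R U s)) (at s) \<and>
        (U has_vector_derivative (- kn s *\<^sub>R T s - tg s *\<^sub>R V s)) (at s) \<and>
        kg differentiable (at s) \<and> kn differentiable (at s) \<and> tg differentiable (at s))"

definition rel_normal_slant_helix :: "real set \<Rightarrow> (real \<Rightarrow> real^3) \<Rightarrow> bool" where
  "rel_normal_slant_helix I V \<longleftrightarrow>
     (\<exists>d::real^3. \<exists>\<phi>::real. norm d = 1 \<and> (\<forall>s\<in>I. V s \<bullet> d = cos \<phi>))"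

end

theory Submission
  imports Defs
begin

text \<open>Since \<gamma>' = T and \<gamma> is orthogonal to V, differentiating the coordinates of \<gamma> in the
Darboux frame gives kg lam1 = tg lam2, lam1' = 1 + kn lam2 and lam2' = - kn lam1; hence
exp F * lam2 is constant, and nonzero because lam1 cannot vanish identically.
With m = (kg^2 + tg^2) / kg the vector R = m \<gamma> + V satisfies V \<bullet> R = 1 and
|R|^2 = 1 + m^2 |\<gamma>|^2. If V \<bullet> d = cos \<phi> for a fixed unit vector d, then d = cos \<phi> R, so
m^2 |\<gamma>|^2 is constant; conversely, if m^2 |\<gamma>|^2 is constant then R' = 0 and R / |R| is an
axis. Finally the square of the function in the theorem times m^2 |\<gamma>|^2 equals
(exp F * lam2)^2, so one of them is constant iff the other is.\<close>

lemma has_real_derivative_inner: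
  fixes f g :: "real \<Rightarrow> 'a::real_inner"
  assumes "(f has_vector_derivative f') (at x)" "(g has_vector_derivative g') (at x)"
  shows "((\<lambda>x. f x \<bullet> g x) has_real_derivative (f x \<bullet> g' + f' \<bullet> g x)) (at x)"
  using bounded_bilinear.has_vector_derivative[OF bounded_bilinear_inner assms]
  by (simp add: has_real_derivative_iff_has_vector_derivative)

lemma has_real_derivative_inner_const:
  fixes f :: "real \<Rightarrow> 'a::real_inner"
  assumes "(f has_vector_derivative f') (at x)"
  shows "((\<lambda>x. f x \<bullet> d) has_real_derivative (f' \<bullet> d)) (at x)"
  using has_real_derivative_inner[OF assms has_vector_derivative_const] by simp

lemma DERIV_zero_if_const_on_open:
  fixes f :: "real \<Rightarrow> real"
  assumes "(f has_real_derivative D) (at s)" "open S" "s \<in> S" "\<And>x. x \<in> S \<Longrightarrow> f x = c"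
  shows "D = 0"
proof -
  have "((\<lambda>_. c) has_real_derivative D) (at s)"
    by (rule has_field_derivative_transform_within_open[OF assms(1-3)]) (use assms(4) in auto)
  then show ?thesis using DERIV_const DERIV_unique by blast
qed

lemma cross3_orthonormal_frame:
  fixes T U x :: "real^3"
  assumes "norm T = 1" "norm U = 1" "T \<bullet> U = 0"
  shows "cross3 U T \<bullet> T = 0" "cross3 U T \<bullet> U = 0" "norm (cross3 U T) = 1"
    "(norm x)\<^sup>2 = (x \<bullet> T)\<^sup>2 + (x \<bullet> cross3 U T)\<^sup>2 + (x \<bullet> U)\<^sup>2"
proof -
  show "cross3 U T \<bullet> T = 0" "cross3 U T \<bullet> U = 0" by (simp_all add: dot_cross_self)
  have "(norm (cross3 U T))\<^sup>2 = 1"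
    using norm_cross_dot[of U T] assms by (simp add: inner_commute)
  then show unit: "norm (cross3 U T) = 1"
    using norm_ge_zero[of "cross3 U T"] by (simp add: power2_eq_1_iff)
  have double_cross: "cross3 (cross3 U T) x = (U \<bullet> x) *\<^sub>R T - (T \<bullet> x) *\<^sub>R U"
    by (simp add: cross3_simps forall_3)
  have "T \<bullet> T = 1" "U \<bullet> U = 1" using assms by (simp_all add: norm_eq_1)
  then have "(norm (cross3 (cross3 U T) x))\<^sup>2 = (x \<bullet> T)\<^sup>2 + (x \<bullet> U)\<^sup>2"
    unfolding double_cross power2_norm_eq_inner using assms(3)
    by (simp add: inner_diff_left inner_diff_right inner_commute power2_eq_square algebra_simps)
  moreover have "(norm (cross3 (cross3 U T) x))\<^sup>2 + (cross3 U T \<bullet> x)\<^sup>2 = (norm x)\<^sup>2"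
    using norm_cross_dot[of "cross3 U T" x] unit by simp
  ultimately show "(norm x)\<^sup>2 = (x \<bullet> T)\<^sup>2 + (x \<bullet> cross3 U T)\<^sup>2 + (x \<bullet> U)\<^sup>2"
    by (simp add: inner_commute)
qed

lemma const_iff_const_if_sq_mult_const:
  fixes f g :: "'a \<Rightarrow> real"
  assumes "\<And>s. s \<in> S \<Longrightarrow> f s > 0" "\<And>s. s \<in> S \<Longrightarrow> g s > 0"
    and "\<And>s. s \<in> S \<Longrightarrow> (f s)\<^sup>2 * g s = c"
  shows "(\<exists>a. \<forall>s\<in>S. f s = a) \<longleftrightarrow> (\<exists>b. \<forall>s\<in>S. g s = b)"
proof
  assume "\<exists>a. \<forall>s\<in>S. f s = a"
  then obtain a where "\<And>s. s \<in> S \<Longrightarrow> f s = a" by blast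
  then have "\<And>s. s \<in> S \<Longrightarrow> g s = c / a\<^sup>2"
    using assms by (metis nonzero_eq_divide_eq mult.commute power_not_zero order_less_irrefl)
  then show "\<exists>b. \<forall>s\<in>S. g s = b" by blast
next
  assume "\<exists>b. \<forall>s\<in>S. g s = b"
  then obtain b where "\<And>s. s \<in> S \<Longrightarrow> g s = b" by blast
  then have "\<And>s. s \<in> S \<Longrightarrow> f s = sqrt (c / b)"
    using assms by (metis less_imp_le less_numeral_extra(3) nonzero_eq_divide_eq real_sqrt_unique)
  then show "\<exists>a. \<forall>s\<in>S. f s = a" by blast
qed

locale darboux_frame =
  fixes I :: "real set" and \<gamma> T V U :: "real \<Rightarrow> real^3" and kg kn tg :: "real \<Rightarrow> real"
  assumes open_domain: "open I" and interval_domain: "is_interval I"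
    and darboux: "darboux_curve I \<gamma> T V U kg kn tg"
begin

lemma
  assumes "s \<in> I"
  shows position_deriv: "(\<gamma> has_vector_derivative T s) (at s)"
    and T_deriv: "(T has_vector_derivative (kg s *\<^sub>R V s + kn s *\<^sub>R U s)) (at s)"
    and V_deriv: "(V has_vector_derivative (- kg s *\<^sub>R T s + tg s *\<^sub>R U s)) (at s)"
    and U_deriv: "(U has_vector_derivative (- kn s *\<^sub>R T s - tg s *\<^sub>R V s)) (at s)"
    and kg_differentiable: "kg differentiable (at s)"
    and tg_differentiable: "tg differentiable (at s)"
  using darboux assms unfolding darboux_curve_def by blast+

lemma frame_inner:
  assumes "s \<in> I"
  shows "T s \<bullet> T s = 1" "V s \<bullet> V s = 1" "U s \<bullet> U s = 1"
    "T s \<bullet> V s = 0" "V s \<bullet> T s = 0" "T s \<bullet> U s = 0" "U s \<bullet> T s = 0"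
    "V s \<bullet> U s = 0" "U s \<bullet> V s = 0"
proof -
  have "norm (T s) = 1" "norm (U s) = 1" "T s \<bullet> U s = 0" "V s = cross3 (U s) (T s)"
    using darboux assms unfolding darboux_curve_def by blast+
  with cross3_orthonormal_frame[of "T s" "U s"] show "T s \<bullet> T s = 1" "V s \<bullet> V s = 1"
    "U s \<bullet> U s = 1" "T s \<bullet> V s = 0" "V s \<bullet> T s = 0" "T s \<bullet> U s = 0" "U s \<bullet> T s = 0"
    "V s \<bullet> U s = 0" "U s \<bullet> V s = 0"
    by (simp_all add: norm_eq_1 inner_commute)
qed

lemma norm_sq_frame:
  assumes "s \<in> I"
  shows "(norm x)\<^sup>2 = (x \<bullet> T s)\<^sup>2 + (x \<bullet> V s)\<^sup>2 + (x \<bullet> U s)\<^sup>2"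
  using darboux assms cross3_orthonormal_frame(4) unfolding darboux_curve_def by metis

end

locale TU_plane_curve = darboux_frame +
  fixes lam1 lam2 F :: "real \<Rightarrow> real"
  assumes kg_nonzero: "s \<in> I \<Longrightarrow> kg s \<noteq> 0"
    and position: "s \<in> I \<Longrightarrow> \<gamma> s = lam1 s *\<^sub>R T s + lam2 s *\<^sub>R U s"
    and F_deriv: "s \<in> I \<Longrightarrow> (F has_real_derivative tg s * kn s / kg s) (at s)"
begin

lemma
  assumes "s \<in> I"
  shows lam1_eq: "lam1 s = \<gamma> s \<bullet> T s" and lam2_eq: "lam2 s = \<gamma> s \<bullet> U s"
    and position_orth_V: "\<gamma> s \<bullet> V s = 0"
  using position[OF assms] frame_inner[OF assms] by (simp_all add: inner_add_left)

lemma norm_position_sq: "s \<in> I \<Longrightarrow> (norm (\<gamma> s))\<^sup>2 = (lam1 s)\<^sup>2 + (lam2 s)\<^sup>2"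
  by (simp add: norm_sq_frame lam1_eq lam2_eq position_orth_V)

lemma lam1_deriv:
  assumes s: "s \<in> I"
  shows "(lam1 has_real_derivative 1 + kn s * lam2 s) (at s)"
proof -
  have "((\<lambda>x. \<gamma> x \<bullet> T x) has_real_derivative
      \<gamma> s \<bullet> (kg s *\<^sub>R V s + kn s *\<^sub>R U s) + T s \<bullet> T s) (at s)"
    by (rule has_real_derivative_inner[OF position_deriv[OF s] T_deriv[OF s]])
  also have "\<gamma> s \<bullet> (kg s *\<^sub>R V s + kn s *\<^sub>R U s) + T s \<bullet> T s = 1 + kn s * lam2 s"
    using s by (simp add: inner_add_right position_orth_V lam2_eq frame_inner)
  finally show ?thesis
    by (rule has_field_derivative_transform_within_open[OF _ open_domain s]) (simp add: lam1_eq)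
qed

lemma lam2_deriv:
  assumes s: "s \<in> I"
  shows "(lam2 has_real_derivative - kn s * lam1 s) (at s)"
proof -
  have "((\<lambda>x. \<gamma> x \<bullet> U x) has_real_derivative
      \<gamma> s \<bullet> (- kn s *\<^sub>R T s - tg s *\<^sub>R V s) + T s \<bullet> U s) (at s)"
    by (rule has_real_derivative_inner[OF position_deriv[OF s] U_deriv[OF s]])
  also have "\<gamma> s \<bullet> (- kn s *\<^sub>R T s - tg s *\<^sub>R V s) + T s \<bullet> U s = - kn s * lam1 s"
    using s by (simp add: inner_diff_right position_orth_V lam1_eq frame_inner)
  finally show ?thesis
    by (rule has_field_derivative_transform_within_open[OF _ open_domain s]) (simp add: lam2_eq)
qed

lemma norm_position_sq_deriv:
  "s \<in> I \<Longrightarrow> ((\<lambda>x. (norm (\<gamma> x))\<^sup>2) has_real_derivative 2 * lam1 s) (at s)"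
  using has_real_derivative_inner[OF position_deriv position_deriv, of s]
  by (simp add: power2_norm_eq_inner lam1_eq inner_commute)

lemma kg_lam1_eq_tg_lam2:
  assumes s: "s \<in> I"
  shows "kg s * lam1 s = tg s * lam2 s"
proof -
  have "((\<lambda>x. \<gamma> x \<bullet> V x) has_real_derivative
      \<gamma> s \<bullet> (- kg s *\<^sub>R T s + tg s *\<^sub>R U s) + T s \<bullet> V s) (at s)"
    by (rule has_real_derivative_inner[OF position_deriv[OF s] V_deriv[OF s]])
  then have "\<gamma> s \<bullet> (- kg s *\<^sub>R T s + tg s *\<^sub>R U s) + T s \<bullet> V s = 0"
    by (rule DERIV_zero_if_const_on_open[OF _ open_domain s]) (rule position_orth_V)
  then show ?thesis
    using s by (simp add: inner_add_right inner_diff_right lam1_eq lam2_eq frame_inner)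
qed

lemma exp_F_lam2_const: "\<exists>c. \<forall>s\<in>I. exp (F s) * lam2 s = c"
proof (rule has_field_derivative_zero_constant)
  show "convex I" using interval_domain is_interval_convex by blast
next
  fix s assume s: "s \<in> I"
  have "((\<lambda>x. exp (F x) * lam2 x) has_real_derivative
      exp (F s) * (tg s * kn s / kg s) * lam2 s + (- kn s * lam1 s) * exp (F s)) (at s)"
    by (rule DERIV_mult[OF DERIV_fun_exp[OF F_deriv[OF s]] lam2_deriv[OF s]])
  also have "exp (F s) * (tg s * kn s / kg s) * lam2 s + (- kn s * lam1 s) * exp (F s) = 0"
    using kg_lam1_eq_tg_lam2[OF s] kg_nonzero[OF s] by (simp add: field_simps)
  finally show "((\<lambda>x. exp (F x) * lam2 x) has_real_derivative 0) (at s within I)"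
    by (rule has_field_derivative_at_within)
qed

lemma lam2_nonzero: "s \<in> I \<Longrightarrow> lam2 s \<noteq> 0"
proof
  assume s: "s \<in> I" and "lam2 s = 0"
  obtain c where c: "\<And>x. x \<in> I \<Longrightarrow> exp (F x) * lam2 x = c"
    using exp_F_lam2_const by blast
  with s \<open>lam2 s = 0\<close> have "\<And>x. x \<in> I \<Longrightarrow> lam2 x = 0" by (metis exp_not_eq_zero mult_eq_0_iff)
  then have "\<And>x. x \<in> I \<Longrightarrow> lam1 x = 0" using kg_lam1_eq_tg_lam2 kg_nonzero by force
  then have "1 + kn s * lam2 s = 0"
    by (rule DERIV_zero_if_const_on_open[OF lam1_deriv[OF s] open_domain s])
  with \<open>lam2 s = 0\<close> show False by simp
qed

definition axis_coeff :: "real \<Rightarrow> real" where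
  "axis_coeff s = ((kg s)\<^sup>2 + (tg s)\<^sup>2) / kg s"

definition axis_vector :: "real \<Rightarrow> real^3" where
  "axis_vector s = axis_coeff s *\<^sub>R \<gamma> s + V s"

definition helix_invariant :: "real \<Rightarrow> real" where
  "helix_invariant s = (axis_coeff s)\<^sup>2 * (norm (\<gamma> s))\<^sup>2"

lemma axis_coeff_mult_lam2:
  "s \<in> I \<Longrightarrow> axis_coeff s * lam2 s = kg s * lam2 s + tg s * lam1 s"
  using kg_lam1_eq_tg_lam2[of s] kg_nonzero[of s]
  by (simp add: axis_coeff_def field_simps power2_eq_square)

lemma axis_coeff_mult_lam2_sq:
  assumes "s \<in> I"
  shows "axis_coeff s * (lam2 s)\<^sup>2 = kg s * (norm (\<gamma> s))\<^sup>2"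
  using axis_coeff_mult_lam2[OF assms] kg_lam1_eq_tg_lam2[OF assms] norm_position_sq[OF assms]
  by (simp add: power2_eq_square algebra_simps)

lemma axis_coeff_nonzero: "s \<in> I \<Longrightarrow> axis_coeff s \<noteq> 0"
  using kg_nonzero[of s] by (simp add: axis_coeff_def add_pos_nonneg)

lemma norm_position_sq_pos: "s \<in> I \<Longrightarrow> (norm (\<gamma> s))\<^sup>2 > 0"
  using norm_position_sq[of s] lam2_nonzero[of s] by (simp add: add_nonneg_pos)

lemma helix_invariant_pos: "s \<in> I \<Longrightarrow> helix_invariant s > 0"
  using axis_coeff_nonzero[of s] norm_position_sq_pos[of s] by (simp add: helix_invariant_def)

lemma
  assumes "s \<in> I"
  shows inner_axis_vector_T: "axis_vector s \<bullet> T s = axis_coeff s * lam1 s"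
    and inner_axis_vector_V: "axis_vector s \<bullet> V s = 1"
    and inner_axis_vector_U: "axis_vector s \<bullet> U s = axis_coeff s * lam2 s"
  using assms
  by (simp_all add: axis_vector_def inner_add_left lam1_eq lam2_eq position_orth_V frame_inner)

lemma norm_axis_vector_sq:
  assumes "s \<in> I"
  shows "(norm (axis_vector s))\<^sup>2 = 1 + helix_invariant s"
  unfolding norm_sq_frame[OF assms, of "axis_vector s"] helix_invariant_def
    norm_position_sq[OF assms]
  using assms by (simp add: inner_axis_vector_T inner_axis_vector_V inner_axis_vector_U
      power_mult_distrib algebra_simps)

lemma helix_axis_components:
  assumes V_d: "\<And>x. x \<in> I \<Longrightarrow> V x \<bullet> d = c" and s: "s \<in> I"
  shows "d \<bullet> T s = c * axis_coeff s * lam1 s" "d \<bullet> U s = c * axis_coeff s * lam2 s"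
proof -
  have T_d: "((\<lambda>x. T x \<bullet> d) has_real_derivative kg x * c + kn x * (U x \<bullet> d)) (at x)"
    if "x \<in> I" for x
    using has_real_derivative_inner_const[OF T_deriv[OF that], where d=d] V_d[OF that]
    by (simp add: inner_add_left)
  have U_d: "((\<lambda>x. U x \<bullet> d) has_real_derivative - kn x * (T x \<bullet> d) - tg x * c) (at x)"
    if "x \<in> I" for x
    using has_real_derivative_inner_const[OF U_deriv[OF that], where d=d] V_d[OF that]
    by (simp add: inner_diff_left)
  have planar: "lam2 x * (T x \<bullet> d) = lam1 x * (U x \<bullet> d)" if x: "x \<in> I" for x
  proof -
    have "(- kg x *\<^sub>R T x + tg x *\<^sub>R U x) \<bullet> d = 0"
      using has_real_derivative_inner_const[OF V_deriv[OF x], where d=d]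
      by (rule DERIV_zero_if_const_on_open[OF _ open_domain x V_d])
    then have "kg x * (T x \<bullet> d) = tg x * (U x \<bullet> d)" by (simp add: inner_diff_left)
    then have "kg x * (lam2 x * (T x \<bullet> d)) = kg x * (lam1 x * (U x \<bullet> d))"
      using kg_lam1_eq_tg_lam2[OF x] by (metis mult.left_commute mult.commute)
    then show ?thesis using kg_nonzero[OF x] by simp
  qed
  have "((\<lambda>x. lam2 x * (T x \<bullet> d) - lam1 x * (U x \<bullet> d)) has_real_derivative
      (- kn s * lam1 s) * (T s \<bullet> d) + (kg s * c + kn s * (U s \<bullet> d)) * lam2 s
      - ((1 + kn s * lam2 s) * (U s \<bullet> d) + (- kn s * (T s \<bullet> d) - tg s * c) * lam1 s)) (at s)"
    by (rule DERIV_diff[OF DERIV_mult[OF lam2_deriv[OF s] T_d[OF s]]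
          DERIV_mult[OF lam1_deriv[OF s] U_d[OF s]]])
  then have "(- kn s * lam1 s) * (T s \<bullet> d) + (kg s * c + kn s * (U s \<bullet> d)) * lam2 s
      - ((1 + kn s * lam2 s) * (U s \<bullet> d) + (- kn s * (T s \<bullet> d) - tg s * c) * lam1 s) = 0"
    by (rule DERIV_zero_if_const_on_open[OF _ open_domain s, where c=0]) (simp add: planar)
  then have U: "U s \<bullet> d = c * axis_coeff s * lam2 s"
    using axis_coeff_mult_lam2[OF s] by (simp add: algebra_simps)
  then show "d \<bullet> U s = c * axis_coeff s * lam2 s" by (simp add: inner_commute)
  show "d \<bullet> T s = c * axis_coeff s * lam1 s"
    using planar[OF s] lam2_nonzero[OF s] unfolding U by (simp add: field_simps inner_commute)
qed

lemma helix_axis_eq: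
  assumes "\<And>x. x \<in> I \<Longrightarrow> V x \<bullet> d = c" and s: "s \<in> I"
  shows "d = c *\<^sub>R axis_vector s"
proof -
  have "(norm (d - c *\<^sub>R axis_vector s))\<^sup>2 = 0"
    unfolding norm_sq_frame[OF s]
    using helix_axis_components[OF assms] assms inner_commute[of d "V s"]
    by (simp add: inner_diff_left inner_axis_vector_T inner_axis_vector_V inner_axis_vector_U)
  then show ?thesis by simp
qed

lemma helix_imp_invariant_const:
  assumes "rel_normal_slant_helix I V"
  shows "\<exists>c. \<forall>s\<in>I. helix_invariant s = c"
proof -
  obtain d \<phi> where d: "norm d = 1" and V_d: "\<And>s. s \<in> I \<Longrightarrow> V s \<bullet> d = cos \<phi>"
    using assms unfolding rel_normal_slant_helix_def by blast
  have "(cos \<phi>)\<^sup>2 * (1 + helix_invariant s) = 1" if s: "s \<in> I" for s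
  proof -
    have "1 = (norm (cos \<phi> *\<^sub>R axis_vector s))\<^sup>2" using d helix_axis_eq[OF V_d s] by simp
    then show ?thesis by (simp add: power_mult_distrib norm_axis_vector_sq[OF s])
  qed
  then have "\<And>s. s \<in> I \<Longrightarrow> helix_invariant s = 1 / (cos \<phi>)\<^sup>2 - 1"
    by (metis add_diff_cancel_left' mult_eq_0_iff nonzero_eq_divide_eq one_neq_zero mult.commute)
  then show ?thesis by blast
qed

lemma axis_coeff_differentiable: "s \<in> I \<Longrightarrow> axis_coeff differentiable (at s)"
  unfolding axis_coeff_def[abs_def]
  using kg_differentiable tg_differentiable kg_nonzero
  by (intro differentiable_divide differentiable_add differentiable_power) auto

lemma axis_coeff_deriv_if_invariant_const:
  assumes K: "\<And>x. x \<in> I \<Longrightarrow> helix_invariant x = k" and s: "s \<in> I"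
    and D: "(axis_coeff has_real_derivative D) (at s)"
  shows "D * lam1 s = kg s - axis_coeff s" "D * lam2 s = - tg s"
proof -
  let ?m = "axis_coeff s" and ?n = "(norm (\<gamma> s))\<^sup>2"
  have "((\<lambda>x. (axis_coeff x)\<^sup>2 * (norm (\<gamma> x))\<^sup>2) has_real_derivative
      (2 * (D * ?m)) * ?n + 2 * lam1 s * ?m\<^sup>2) (at s)"
    using DERIV_mult[OF DERIV_power[OF D, of 2] norm_position_sq_deriv[OF s]] by simp
  then have "(2 * (D * ?m)) * ?n + 2 * lam1 s * ?m\<^sup>2 = 0"
    by (rule DERIV_zero_if_const_on_open[OF _ open_domain s])
      (use K in \<open>simp add: helix_invariant_def\<close>)
  then have "2 * ?m * (D * ?n + ?m * lam1 s) = 0" by (simp add: power2_eq_square algebra_simps)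
  then have Dn: "D * ?n = - ?m * lam1 s" using axis_coeff_nonzero[OF s] by simp
  have n_pos: "?n > 0" by (rule norm_position_sq_pos[OF s])
  have mn: "?m * (lam2 s)\<^sup>2 = kg s * ?n" by (rule axis_coeff_mult_lam2_sq[OF s])
  have n: "?n = (lam1 s)\<^sup>2 + (lam2 s)\<^sup>2" by (rule norm_position_sq[OF s])
  have "D * lam1 s * ?n = - ?m * (lam1 s)\<^sup>2"
    using arg_cong[OF Dn, of "\<lambda>y. lam1 s * y"] by (simp add: power2_eq_square algebra_simps)
  also have "\<dots> = (kg s - ?m) * ?n"
    using mn n by (simp add: algebra_simps)
  finally have "D * lam1 s * ?n = (kg s - ?m) * ?n" .
  then show "D * lam1 s = kg s - ?m" using n_pos by simp
  have "(D * lam2 s) * (?n * lam2 s) = - (?m * (lam2 s)\<^sup>2) * lam1 s"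
    using arg_cong[OF Dn, of "\<lambda>y. (lam2 s)\<^sup>2 * y"] by (simp add: power2_eq_square algebra_simps)
  also have "\<dots> = - tg s * (?n * lam2 s)"
    unfolding mn using kg_lam1_eq_tg_lam2[OF s] by (simp add: algebra_simps)
  finally have "(D * lam2 s) * (?n * lam2 s) = - tg s * (?n * lam2 s)" .
  moreover have "?n * lam2 s \<noteq> 0" using n_pos lam2_nonzero[OF s] by simp
  ultimately show "D * lam2 s = - tg s" by (metis mult_minus_left mult_right_cancel)
qed

lemma axis_vector_deriv_if_invariant_const:
  assumes "\<And>x. x \<in> I \<Longrightarrow> helix_invariant x = k" and s: "s \<in> I"
  shows "(axis_vector has_vector_derivative 0) (at s)"
proof -
  obtain D where D: "(axis_coeff has_real_derivative D) (at s)"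
    using axis_coeff_differentiable[OF s] real_differentiable_def by blast
  have "(axis_vector has_vector_derivative
      (axis_coeff s *\<^sub>R T s + D *\<^sub>R \<gamma> s + (- kg s *\<^sub>R T s + tg s *\<^sub>R U s))) (at s)"
    unfolding axis_vector_def[abs_def]
    by (intro has_vector_derivative_add has_vector_derivative_scaleR D position_deriv[OF s]
        V_deriv[OF s])
  also have "axis_coeff s *\<^sub>R T s + D *\<^sub>R \<gamma> s + (- kg s *\<^sub>R T s + tg s *\<^sub>R U s)
      = (axis_coeff s + D * lam1 s - kg s) *\<^sub>R T s + (D * lam2 s + tg s) *\<^sub>R U s"
    using position[OF s] by (simp add: algebra_simps)
  also have "\<dots> = 0"
    using axis_coeff_deriv_if_invariant_const[OF assms D] by simp
  finally show ?thesis .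
qed

lemma invariant_const_imp_helix:
  assumes "\<exists>k. \<forall>s\<in>I. helix_invariant s = k" and "I \<noteq> {}"
  shows "rel_normal_slant_helix I V"
proof -
  obtain k where k: "\<And>s. s \<in> I \<Longrightarrow> helix_invariant s = k" using assms(1) by blast
  obtain R where R: "\<And>s. s \<in> I \<Longrightarrow> axis_vector s = R"
    using has_vector_derivative_zero_constant[of I axis_vector] interval_domain is_interval_convex
      axis_vector_deriv_if_invariant_const[OF k] has_vector_derivative_at_within by metis
  obtain s0 where s0: "s0 \<in> I" using assms(2) by blast
  have V_R: "\<And>s. s \<in> I \<Longrightarrow> V s \<bullet> R = 1"
    using inner_axis_vector_V R by (simp add: inner_commute)
  have R_ge: "1 \<le> norm R"
    using norm_cauchy_schwarz[of "V s0" R] V_R[OF s0] frame_inner(2)[OF s0, folded norm_eq_1]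
    by simp
  have "0 \<le> 1 / norm R" by simp
  then have "cos (arccos (1 / norm R)) = 1 / norm R"
    using R_ge by (intro cos_arccos) (linarith, simp add: divide_le_eq_1)
  moreover have "V s \<bullet> (R /\<^sub>R norm R) = 1 / norm R" if "s \<in> I" for s
    using V_R[OF that] by (simp add: inverse_eq_divide)
  moreover have "norm (R /\<^sub>R norm R) = 1" using R_ge by (auto simp: field_simps)
  ultimately show ?thesis unfolding rel_normal_slant_helix_def by metis
qed

lemma helix_iff_invariant_const:
  assumes "I \<noteq> {}"
  shows "rel_normal_slant_helix I V \<longleftrightarrow> (\<exists>k. \<forall>s\<in>I. helix_invariant s = k)"
  using helix_imp_invariant_const invariant_const_imp_helix[OF _ assms] by blast

lemma slant_function_sq_mult_invariant:
  assumes s: "s \<in> I"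
  shows "((kg s)\<^sup>2 / ((kg s)\<^sup>2 + (tg s)\<^sup>2) powr (3/2) * exp (F s))\<^sup>2 * helix_invariant s
    = (exp (F s) * lam2 s)\<^sup>2"
proof -
  define q where "q = (kg s)\<^sup>2 + (tg s)\<^sup>2"
  have q_pos: "q > 0" using kg_nonzero[OF s] unfolding q_def by (simp add: add_pos_nonneg)
  have "(q powr (3/2))\<^sup>2 = q powr (3/2 + 3/2)"
    unfolding power2_eq_square powr_add by simp
  also have "\<dots> = q ^ 3" using powr_realpow[OF q_pos, of 3] by simp
  finally have "(q powr (3/2))\<^sup>2 = q ^ 3" .
  moreover have "(kg s)\<^sup>2 * (norm (\<gamma> s))\<^sup>2 = q * (lam2 s)\<^sup>2"
    using axis_coeff_mult_lam2_sq[OF s] kg_nonzero[OF s]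
    unfolding q_def axis_coeff_def by (simp add: field_simps power2_eq_square)
  ultimately show ?thesis
    using kg_nonzero[OF s] q_pos unfolding helix_invariant_def axis_coeff_def q_def[symmetric]
    by (simp add: field_simps power2_eq_square power3_eq_cube power4_eq_xxxx)
qed

end

theorem theorem3p2:
  fixes I :: "real set"
    and \<gamma> T V U :: "real \<Rightarrow> real^3"
    and kg kn tg lam1 lam2 F :: "real \<Rightarrow> real"
  assumes I: "open I" "is_interval I" "I \<noteq> {}"
    and frame: "darboux_curve I \<gamma> T V U kg kn tg"
    and kg_nz: "\<forall>s\<in>I. kg s \<noteq> 0"
    and pos: "\<forall>s\<in>I. \<gamma> s = lam1 s *\<^sub>R T s + lam2 s *\<^sub>R U s"
    and lam_diff: "\<forall>s\<in>I. lam1 differentiable (at s) \<and> lam2 differentiable (at s)"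
    and F: "\<forall>s\<in>I. (F has_real_derivative (tg s * kn s / kg s)) (at s)"
  shows "rel_normal_slant_helix I V \<longleftrightarrow>
    (\<exists>c. \<forall>s\<in>I. (kg s)\<^sup>2 / ((kg s)\<^sup>2 + (tg s)\<^sup>2) powr (3/2) * exp (F s) = c)"
proof -
  interpret TU_plane_curve I \<gamma> T V U kg kn tg lam1 lam2 F
    using I frame kg_nz pos F by unfold_locales auto
  obtain c where c: "\<And>s. s \<in> I \<Longrightarrow> exp (F s) * lam2 s = c"
    using exp_F_lam2_const by blast
  have "rel_normal_slant_helix I V \<longleftrightarrow> (\<exists>k. \<forall>s\<in>I. helix_invariant s = k)"
    by (rule helix_iff_invariant_const[OF I(3)])
  also have "\<dots> \<longleftrightarrow>
      (\<exists>c. \<forall>s\<in>I. (kg s)\<^sup>2 / ((kg s)\<^sup>2 + (tg s)\<^sup>2) powr (3/2) * exp (F s) = c)"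
    using kg_nz helix_invariant_pos slant_function_sq_mult_invariant c
    by (intro const_iff_const_if_sq_mult_const[symmetric, where c="c\<^sup>2"]) auto
  finally show ?thesis .
qed

end
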